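(* Let $0<\beta<1$ and $\boldsymbol\lambda=(\lambda_j)_{j\ge1}$ nonnegative reals with $\delta=\sum_j\lambda_j\in(0,\infty)$ and $\sum_j t^j\lambda_j<\infty$ for $0<|t|<M$, some $M>0$. Let $Y_1,Y_2,\dots$ be i.i.d. with $\mathbb P(Y_1=j)=\lambda_j/\delta$, $j\in\mathbb N$, independent of a time fractional Poisson process $\{N_\beta(t,\delta)\}_{t\ge0}$, let $H_\beta(t,\boldsymbol\lambda)=\sum_{j=1}^{N_\beta(t,\delta)}Y_j$, $q(n|t,\boldsymbol\lambda)=\mathbb P(H_\beta(t,\boldsymbol\lambda)=n)$, $h_k(n)=\mathbb P(Y_1+\cdots+Y_k=n)$, and $p_\beta(n|t,\delta)=\mathbb P(N_\beta(t,\delta)=n)$. Then, with $\partial_t^\beta$ the Caputo fractional derivative in $t$, $$\partial_t^\beta q(0|t,\boldsymbol\lambda)=-\delta\,p_\beta(0|t,\delta),$$ and for $n\ge1$ $$\partial_t^\beta q(n|t,\boldsymbol\lambda)=-\delta\,q(n|t,\boldsymbol\lambda)+\delta\sum_{k=1}^n h_k(n)\,p_\beta(k-1|t,\delta).$$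
   Context: The time fractional Poisson process $N_\beta(t,\lambda)$ ($0<\beta<1$, $\lambda>0$) is the renewal counting process $\max\{n:U_1+\cdots+U_n\le t\}$ with $U_i$ i.i.d. and $\mathbb P(U_1\le u)=1-M_\beta(-\lambda u^\beta)$, $M_\beta(z)=\sum_{k\ge0}z^k/\Gamma(\beta k+1)$; its PMF is $p_\beta(n|t,\lambda)=\frac{(\lambda t^\beta)^n}{n!}M_\beta^{(n)}(-\lambda t^\beta)$ for $t>0$, with $p_\beta(0|0,\lambda)=1$ and $p_\beta(n|0,\lambda)=0$ for $n\ge1$. For $0<\beta<1$ the Caputo derivative is $\partial_t^\beta f(t)=\frac{1}{\Gamma(1-\beta)}\int_0^t f'(s)(t-s)^{-\beta}\,ds$. *)

theory Defs
  imports "HOL-Probability.Probability"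
begin

definition mittag_leffler :: "real \<Rightarrow> real \<Rightarrow> real" where
  "mittag_leffler \<beta> z = (\<Sum>k. z ^ k / Gamma (\<beta> * real k + 1))"

definition tfpp_pmf :: "real \<Rightarrow> real \<Rightarrow> nat \<Rightarrow> real \<Rightarrow> real" where
  "tfpp_pmf \<beta> lam n t =
     (if t = 0 then (if n = 0 then 1 else 0)
      else (lam * t powr \<beta>) ^ n / fact n * (deriv ^^ n) (mittag_leffler \<beta>) (- lam * t powr \<beta>))"

definition has_caputo_deriv :: "real \<Rightarrow> (real \<Rightarrow> real) \<Rightarrow> real \<Rightarrow> real \<Rightarrow> bool" where
  "has_caputo_deriv \<beta> f t D \<longleftrightarrow>
     (\<forall>s\<in>{0<..<t}. f differentiable (at s)) \<and>
     ((\<lambda>s. deriv f s * (t - s) powr (- \<beta>) / Gamma (1 - \<beta>)) has_integral D) {0..t}"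

end

theory Submission
  imports Defs
begin

(* With u = t powr \<beta>, the PMF p_k(t) of N_\<beta>(t,\<delta>) is the entire series
   \<Sum>_m C(m,k) (-1)^(m-k) \<delta>^m u^m / \<Gamma>(\<beta> m + 1).  A Beta integral shows that the Caputo
   derivative maps t^(\<beta> m) / \<Gamma>(\<beta> m + 1) to t^(\<beta> (m-1)) / \<Gamma>(\<beta> (m-1) + 1), i.e. it shifts
   the coefficient sequence; termwise integration is justified by dominated convergence, and
   Pascal's rule for C(m,k) turns the shift into  \<partial>^\<beta> p_k = -\<delta> p_k + \<delta> p_(k-1).
   Since Y_j \<ge> 1 almost surely, Y_1 + ... + Y_N can only equal n when N \<le> n, so independence of
   N and the Y_j gives q(n|t) = \<Sum>_(k\<le>n) h_k(n) p_k(t), a finite combination of PMFs. *)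

section \<open>Growth of the Gamma function\<close>

(* Log-convexity of Gamma, applied to x + 1 = \<beta> (x + \<beta>) + (1 - \<beta>) (x + \<beta> + 1). *)
lemma Gamma_le_Gamma_shift_powr:
  fixes x \<beta> :: real
  assumes x: "x > 0" and \<beta>: "0 < \<beta>" "\<beta> < 1"
  shows "x * Gamma x \<le> Gamma (x + \<beta>) * (x + \<beta>) powr (1 - \<beta>)"
proof -
  have pos: "Gamma (x + \<beta>) > 0" "x + \<beta> > 0"
    using x \<beta> by auto
  have "ln (Gamma (\<beta> * (x + \<beta>) + (1 - \<beta>) * (x + \<beta> + 1)))
      \<le> \<beta> * ln (Gamma (x + \<beta>)) + (1 - \<beta>) * ln (Gamma (x + \<beta> + 1))"
    using convex_onD[OF log_convex_Gamma_real, of "1 - \<beta>" "x + \<beta>" "x + \<beta> + 1"] x \<beta>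
    by (simp add: o_def)
  also have "Gamma (x + \<beta> + 1) = (x + \<beta>) * Gamma (x + \<beta>)"
    using pos by (intro Gamma_plus1) auto
  also have "ln \<dots> = ln (x + \<beta>) + ln (Gamma (x + \<beta>))"
    using pos by (intro ln_mult_pos)
  also have "\<beta> * ln (Gamma (x + \<beta>)) + (1 - \<beta>) * (ln (x + \<beta>) + ln (Gamma (x + \<beta>)))
      = ln (Gamma (x + \<beta>)) + (1 - \<beta>) * ln (x + \<beta>)"
    by (simp add: algebra_simps)
  also have "\<dots> = ln (Gamma (x + \<beta>) * (x + \<beta>) powr (1 - \<beta>))"
    using pos by (subst ln_mult_pos) auto
  also have "\<beta> * (x + \<beta>) + (1 - \<beta>) * (x + \<beta> + 1) = x + 1"
    by (simp add: algebra_simps)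
  also have "Gamma (x + 1) = x * Gamma x"
    using x by (intro Gamma_plus1) auto
  finally show ?thesis
    using pos x by simp
qed

lemma Gamma_ratio_le:
  fixes x \<beta> :: real
  assumes x: "x \<ge> 1" and \<beta>: "0 < \<beta>" "\<beta> < 1"
  shows "x powr \<beta> * Gamma x \<le> 2 * Gamma (x + \<beta>)"
proof -
  have "(x + \<beta>) powr (1 - \<beta>) \<le> (2 * x) powr (1 - \<beta>)"
    using x \<beta> by (intro powr_mono2) auto
  also have "\<dots> \<le> 2 * x powr (1 - \<beta>)"
    using x \<beta> powr_mono[of "1 - \<beta>" 1 2] by (simp add: powr_mult)
  finally have "Gamma (x + \<beta>) * (x + \<beta>) powr (1 - \<beta>) \<le> Gamma (x + \<beta>) * (2 * x powr (1 - \<beta>))"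
    using x \<beta> by (intro mult_left_mono) auto
  then have "x * Gamma x \<le> Gamma (x + \<beta>) * (2 * x powr (1 - \<beta>))"
    using Gamma_le_Gamma_shift_powr[of x \<beta>] x \<beta> by linarith
  also have "x * Gamma x = x powr (1 - \<beta>) * (x powr \<beta> * Gamma x)"
    using x by (simp flip: mult.assoc powr_add)
  finally show ?thesis
    using x by (simp add: mult.left_commute[of "x powr (1 - \<beta>)"])
qed

lemma summable_power_div_Gamma:
  fixes \<beta> z :: real
  assumes \<beta>: "0 < \<beta>" "\<beta> < 1"
  shows "summable (\<lambda>m. z ^ m / Gamma (\<beta> * real m + 1))"
proof -
  define K where "K = (4 * \<bar>z\<bar> + 1) powr (1 / \<beta>)"
  obtain N :: nat where N: "K / \<beta> \<le> real N"
    using real_arch_simple by blast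
  show ?thesis
  proof (rule summable_ratio_test[where c = "1/2" and N = N])
    fix n assume n: "n \<ge> N"
    define x where "x = \<beta> * real n + 1"
    have "x \<ge> 1"
      using \<beta> by (simp add: x_def)
    then have x: "x \<ge> 1" "Gamma x > 0" "Gamma (x + \<beta>) > 0"
      using \<beta> by auto
    have "K \<le> \<beta> * real N"
      using N \<beta> by (simp add: field_simps)
    also have "\<dots> \<le> \<beta> * real n"
      using n \<beta> by (intro mult_left_mono) auto
    also have "\<dots> \<le> x"
      by (simp add: x_def)
    finally have "K powr \<beta> \<le> x powr \<beta>"
      using \<beta> by (intro powr_mono2) (auto simp: K_def)
    then have "4 * \<bar>z\<bar> + 1 \<le> x powr \<beta>"
      using \<beta> by (simp add: K_def powr_powr)
    then have "(4 * \<bar>z\<bar> + 1) * Gamma x \<le> 2 * Gamma (x + \<beta>)"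
      using Gamma_ratio_le[OF x(1) \<beta>] x(2) by (meson mult_right_mono less_imp_le order.trans)
    then have "4 * (\<bar>z\<bar> * Gamma x) + Gamma x \<le> 2 * Gamma (x + \<beta>)"
      by (simp add: algebra_simps)
    then have "\<bar>z\<bar> * Gamma x \<le> 1 / 2 * Gamma (x + \<beta>)"
      using x(2) by linarith
    then have "\<bar>z\<bar> ^ n * (\<bar>z\<bar> * Gamma x) \<le> \<bar>z\<bar> ^ n * (1 / 2 * Gamma (x + \<beta>))"
      by (intro mult_left_mono) auto
    then have "\<bar>z\<bar> ^ Suc n / Gamma (x + \<beta>) \<le> 1 / 2 * (\<bar>z\<bar> ^ n / Gamma x)"
      using x by (simp add: divide_simps mult_ac)
    moreover have "\<beta> * real (Suc n) + 1 = x + \<beta>"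
      by (simp add: x_def algebra_simps)
    ultimately show "norm (z ^ Suc n / Gamma (\<beta> * real (Suc n) + 1))
        \<le> 1 / 2 * norm (z ^ n / Gamma (\<beta> * real n + 1))"
      using x by (simp add: x_def[symmetric] power_abs abs_mult)
  qed simp
qed

section \<open>Power series in fractional powers and the Caputo derivative\<close>

lemma summable_diffs_funpow:
  fixes c :: "nat \<Rightarrow> 'a::{real_normed_field,banach}"
  assumes "\<And>y. summable (\<lambda>n. c n * y ^ n)"
  shows "summable (\<lambda>n. (diffs ^^ k) c n * y ^ n)"
  using assms by (induction k arbitrary: y) (auto intro: termdiff_converges_all)

lemma higher_deriv_powser:
  fixes c :: "nat \<Rightarrow> 'a::{real_normed_field,banach}"
  assumes "\<And>y. summable (\<lambda>n. c n * y ^ n)"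
  shows "(deriv ^^ k) (\<lambda>z. \<Sum>n. c n * z ^ n) = (\<lambda>z. \<Sum>n. (diffs ^^ k) c n * z ^ n)"
proof (induction k)
  case (Suc k)
  have "deriv (\<lambda>z. \<Sum>n. (diffs ^^ k) c n * z ^ n) z = (\<Sum>n. diffs ((diffs ^^ k) c) n * z ^ n)" for z
    by (intro DERIV_imp_deriv termdiffs_strong_converges_everywhere summable_diffs_funpow assms)
  with Suc show ?case
    by auto
qed simp

lemma diffs_funpow:
  fixes c :: "nat \<Rightarrow> 'a::field_char_0"
  shows "(diffs ^^ k) c n = fact (n + k) / fact n * c (n + k)"
proof (induction k arbitrary: n)
  case (Suc k)
  have "(diffs ^^ Suc k) c n = of_nat (Suc n) * (fact (Suc n + k) / fact (Suc n) * c (Suc n + k))"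
    by (simp add: diffs_def Suc.IH)
  also have "\<dots> = fact (n + Suc k) / fact n * c (n + Suc k)"
    by (simp add: field_simps del: of_nat_Suc)
  finally show ?case .
qed simp

lemma powr_power_eq: "t > 0 \<Longrightarrow> (t powr \<beta>) ^ n = t powr (\<beta> * real n)"
  for t \<beta> :: real
  by (simp add: powr_powr flip: powr_realpow)

lemma diffs_div_Gamma:
  fixes a :: "nat \<Rightarrow> real"
  assumes "\<beta> > 0"
  shows "diffs (\<lambda>m. a m / Gamma (\<beta> * real m + 1)) n * \<beta> = a (Suc n) / Gamma (\<beta> * real (Suc n))"
proof -
  define x where "x = \<beta> * real (Suc n)"
  have "x > 0"
    unfolding x_def using assms by (intro mult_pos_pos) auto
  then have "Gamma (x + 1) = x * Gamma x" "Gamma x > 0"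
    by (intro Gamma_plus1, auto)
  have "diffs (\<lambda>m. a m / Gamma (\<beta> * real m + 1)) n * \<beta> = x * a (Suc n) / Gamma (x + 1)"
    unfolding diffs_def x_def[symmetric] by (simp add: x_def)
  also have "\<dots> = a (Suc n) / Gamma x"
    using \<open>x > 0\<close> \<open>Gamma (x + 1) = x * Gamma x\<close> by simp
  finally show ?thesis
    by (simp add: x_def)
qed

lemma has_integral_Beta_real_Icc:
  fixes a b t :: real
  assumes a: "a > 0" and b: "b > 0" and t: "t > 0"
  shows "((\<lambda>s. s powr (a - 1) * (t - s) powr (b - 1)) has_integral t powr (a + b - 1) * Beta a b) {0..t}"
proof -
  define g where "g = (\<lambda>s. s powr (a - 1) * (t - s) powr (b - 1))"
  have g_scaled: "g (t * u) = t powr (a + b - 2) * (u powr (a - 1) * (1 - u) powr (b - 1))"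
    if "u \<in> {0..1}" for u
  proof -
    have "g (t * u) = (t * u) powr (a - 1) * (t * (1 - u)) powr (b - 1)"
      by (simp add: g_def right_diff_distrib)
    also have "\<dots> = (t powr (a - 1) * t powr (b - 1)) * (u powr (a - 1) * (1 - u) powr (b - 1))"
      using that t by (simp add: powr_mult)
    also have "t powr (a - 1) * t powr (b - 1) = t powr (a + b - 2)"
      using powr_add[of t "a - 1" "b - 1"] by (simp add: algebra_simps)
    finally show ?thesis .
  qed
  have "((\<lambda>u. t powr (a + b - 2) * (u powr (a - 1) * (1 - u) powr (b - 1)))
      has_integral t powr (a + b - 2) * Beta a b) {0..1}"
    by (intro has_integral_mult_right has_integral_Beta_real a b)
  then have "((\<lambda>u. g (t * u)) has_integral t powr (a + b - 2) * Beta a b) {0..1}"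
    by (rule has_integral_eq[rotated]) (use g_scaled in auto)
  then have "((\<lambda>u. g (t * u)) has_integral t powr (a + b - 2) * Beta a b) ((\<lambda>s. s / t) ` {0..t})"
    using t by simp
  then have "(g has_integral t * (t powr (a + b - 2) * Beta a b)) {0..t}"
    using has_integral_stretch_real_iff[where m = t and f = g and a = 0 and b = t] t by simp
  moreover have "t * t powr (a + b - 2) = t powr (a + b - 1)"
    using t powr_add[of t "a + b - 2" 1] by simp
  ultimately show ?thesis
    by (simp add: g_def flip: mult.assoc)
qed

lemma has_integral_Riemann_Liouville_powr:
  fixes x \<alpha> t :: real
  assumes x: "x > 0" and \<alpha>: "\<alpha> > 0" and t: "t > 0"
  shows "((\<lambda>s. s powr (x - 1) / Gamma x * ((t - s) powr (\<alpha> - 1) / Gamma \<alpha>))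
           has_integral t powr (x + \<alpha> - 1) / Gamma (x + \<alpha>)) {0..t}"
proof -
  define C where "C = 1 / (Gamma x * Gamma \<alpha>)"
  have "Gamma x > 0" "Gamma \<alpha> > 0" "Gamma (x + \<alpha>) > 0"
    using x \<alpha> by auto
  then have "C * (t powr (x + \<alpha> - 1) * Beta x \<alpha>) = t powr (x + \<alpha> - 1) / Gamma (x + \<alpha>)"
    by (simp add: C_def Beta_def)
  moreover have "C * (s powr (x - 1) * (t - s) powr (\<alpha> - 1))
      = s powr (x - 1) / Gamma x * ((t - s) powr (\<alpha> - 1) / Gamma \<alpha>)" for s
    by (simp add: C_def)
  ultimately show ?thesis
    using has_integral_mult_right[OF has_integral_Beta_real_Icc[OF x \<alpha> t], of C] by simp
qed

lemma has_integral_suminf_dominated: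
  fixes f :: "nat \<Rightarrow> 'a::euclidean_space \<Rightarrow> real"
  assumes f: "\<And>n. (f n has_integral I n) S"
    and bound: "\<And>n x. x \<in> S \<Longrightarrow> \<bar>f n x\<bar> \<le> b n * w x"
    and b: "summable b" "\<And>n. b n \<ge> 0"
    and w: "w integrable_on S" "\<And>x. x \<in> S \<Longrightarrow> w x \<ge> 0"
  shows "((\<lambda>x. \<Sum>n. f n x) has_integral (\<Sum>n. I n)) S"
proof -
  define P where "P N x = (\<Sum>n<N. f n x)" for N x
  have P_integral: "(P N has_integral (\<Sum>n<N. I n)) S" for N
    unfolding P_def by (intro has_integral_sum f) auto
  have P_bound: "norm (P N x) \<le> suminf b * w x" if "x \<in> S" for N x
  proof -
    have "norm (P N x) \<le> (\<Sum>n<N. b n * w x)"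
      unfolding P_def using bound[OF that] by (intro sum_norm_le) auto
    also have "\<dots> \<le> suminf b * w x"
      unfolding sum_distrib_right[symmetric]
      using b w(2)[OF that] by (intro mult_right_mono sum_le_suminf) auto
    finally show ?thesis .
  qed
  have P_lim: "(\<lambda>N. P N x) \<longlonglongrightarrow> (\<Sum>n. f n x)" if "x \<in> S" for x
  proof -
    have "summable (\<lambda>n. f n x)"
      using bound[OF that] summable_mult2[OF b(1), of "w x"]
      by (intro summable_comparison_test[of "\<lambda>n. f n x" "\<lambda>n. b n * w x"]) auto
    then show ?thesis
      unfolding P_def by (rule summable_LIMSEQ)
  qed
  have "(\<lambda>x. suminf b * w x) integrable_on S"
    using w(1) by (rule integrable_on_mult_right)
  note lim = dominated_convergence[of P S "\<lambda>x. suminf b * w x" "\<lambda>x. \<Sum>n. f n x",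
      OF has_integral_integrable[OF P_integral] this P_bound P_lim]
  moreover have "integral S (P N) = (\<Sum>n<N. I n)" for N
    using P_integral by (rule integral_unique)
  ultimately have "I sums integral S (\<lambda>x. \<Sum>n. f n x)"
    by (simp add: sums_def)
  with lim(1) show ?thesis
    by (simp add: sums_iff has_integral_integral)
qed

lemma has_caputo_derivI:
  assumes "\<And>s. s \<in> {0<..<t} \<Longrightarrow> (f has_real_derivative f' s) (at s)"
    and "((\<lambda>s. f' s * (t - s) powr (- \<beta>) / Gamma (1 - \<beta>)) has_integral D) {0<..<t}"
  shows "has_caputo_deriv \<beta> f t D"
proof -
  have "((\<lambda>s. deriv f s * (t - s) powr (- \<beta>) / Gamma (1 - \<beta>)) has_integral D) {0<..<t}"
    using assms(2) by (rule has_integral_eq[rotated]) (auto simp: DERIV_imp_deriv[OF assms(1)])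
  moreover have "f differentiable (at s)" if "s \<in> {0<..<t}" for s
    using assms(1)[OF that] by (rule differentiableI[OF has_field_derivative_imp_has_derivative])
  ultimately show ?thesis
    by (simp add: has_caputo_deriv_def has_integral_Icc_iff_Ioo)
qed

lemma has_caputo_derivD:
  assumes "has_caputo_deriv \<beta> f t D"
  shows "\<And>s. s \<in> {0<..<t} \<Longrightarrow> (f has_real_derivative deriv f s) (at s)"
    and "((\<lambda>s. deriv f s * (t - s) powr (- \<beta>) / Gamma (1 - \<beta>)) has_integral D) {0<..<t}"
  using assms by (auto simp: has_caputo_deriv_def has_integral_Icc_iff_Ioo DERIV_deriv_iff_real_differentiable)

lemma has_caputo_deriv_cong:
  assumes eq: "\<And>s. s \<in> {0<..<t} \<Longrightarrow> f s = g s" and g: "has_caputo_deriv \<beta> g t D"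
  shows "has_caputo_deriv \<beta> f t D"
proof (rule has_caputo_derivI)
  fix s assume s: "s \<in> {0<..<t}"
  show "(f has_real_derivative deriv g s) (at s)"
    by (rule has_field_derivative_transform_within_open[OF has_caputo_derivD(1)[OF g s] _ s])
      (simp_all add: eq)
qed (rule has_caputo_derivD(2)[OF g])

lemma has_caputo_deriv_sum:
  assumes "finite K" and "\<And>k. k \<in> K \<Longrightarrow> has_caputo_deriv \<beta> (f k) t (D k)"
  shows "has_caputo_deriv \<beta> (\<lambda>s. \<Sum>k\<in>K. c k * f k s) t (\<Sum>k\<in>K. c k * D k)"
proof (rule has_caputo_derivI)
  fix s assume "s \<in> {0<..<t}"
  then show "((\<lambda>s. \<Sum>k\<in>K. c k * f k s) has_real_derivative (\<Sum>k\<in>K. c k * deriv (f k) s)) (at s)"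
    using has_caputo_derivD(1)[OF assms(2)] by (auto intro!: DERIV_sum DERIV_cmult)
next
  have "((\<lambda>s. \<Sum>k\<in>K. c k * (deriv (f k) s * (t - s) powr (- \<beta>) / Gamma (1 - \<beta>)))
      has_integral (\<Sum>k\<in>K. c k * D k)) {0<..<t}"
    using has_caputo_derivD(2)[OF assms(2)]
    by (intro has_integral_sum assms(1) has_integral_mult_right) auto
  then show "((\<lambda>s. (\<Sum>k\<in>K. c k * deriv (f k) s) * (t - s) powr (- \<beta>) / Gamma (1 - \<beta>))
      has_integral (\<Sum>k\<in>K. c k * D k)) {0<..<t}"
    by (simp add: sum_distrib_right sum_divide_distrib mult.assoc)
qed

lemma integrable_Caputo_kernel:
  fixes \<beta> t :: real
  assumes \<beta>: "0 < \<beta>" "\<beta> < 1" and t: "t > 0"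
  shows "(\<lambda>s. s powr (\<beta> - 1) * ((t - s) powr (- \<beta>) / Gamma (1 - \<beta>))) integrable_on {0..t}"
proof -
  have "((\<lambda>s. Gamma \<beta> * (s powr (\<beta> - 1) / Gamma \<beta> * ((t - s) powr (1 - \<beta> - 1) / Gamma (1 - \<beta>))))
      has_integral Gamma \<beta> * (t powr (\<beta> + (1 - \<beta>) - 1) / Gamma (\<beta> + (1 - \<beta>)))) {0..t}"
    using \<beta> t by (intro has_integral_mult_right has_integral_Riemann_Liouville_powr) auto
  moreover have "Gamma \<beta> > 0"
    using \<beta> by simp
  ultimately show ?thesis
    by (auto simp: integrable_on_def)
qed

lemma has_integral_Caputo_kernel_series:
  fixes a :: "nat \<Rightarrow> real"
  assumes \<beta>: "0 < \<beta>" "\<beta> < 1" and t: "t > 0"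
    and summable: "summable (\<lambda>n. \<bar>a (Suc n)\<bar> / Gamma (\<beta> * real (Suc n)) * (t powr \<beta>) ^ n)"
  shows "((\<lambda>s. \<Sum>n. a (Suc n) * (s powr (\<beta> * real (Suc n) - 1) / Gamma (\<beta> * real (Suc n))
                     * ((t - s) powr (- \<beta>) / Gamma (1 - \<beta>))))
           has_integral (\<Sum>n. a (Suc n) / Gamma (\<beta> * real n + 1) * (t powr \<beta>) ^ n)) {0..t}"
proof (rule has_integral_suminf_dominated[where
      w = "\<lambda>s. s powr (\<beta> - 1) * ((t - s) powr (- \<beta>) / Gamma (1 - \<beta>))"
      and b = "\<lambda>n. \<bar>a (Suc n)\<bar> / Gamma (\<beta> * real (Suc n)) * (t powr \<beta>) ^ n"])
  fix n
  define x where "x = \<beta> * real (Suc n)"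
  have "x > 0"
    unfolding x_def using \<beta> by (intro mult_pos_pos) auto
  then have "((\<lambda>s. s powr (x - 1) / Gamma x * ((t - s) powr (1 - \<beta> - 1) / Gamma (1 - \<beta>)))
      has_integral t powr (x + (1 - \<beta>) - 1) / Gamma (x + (1 - \<beta>))) {0..t}"
    using \<beta> t by (intro has_integral_Riemann_Liouville_powr) auto
  moreover have "x + (1 - \<beta>) = \<beta> * real n + 1"
    by (simp add: x_def algebra_simps)
  ultimately have RL: "((\<lambda>s. s powr (x - 1) / Gamma x * ((t - s) powr (- \<beta>) / Gamma (1 - \<beta>)))
      has_integral (t powr \<beta>) ^ n / Gamma (\<beta> * real n + 1)) {0..t}"
    using t by (simp add: powr_power_eq)
  show "((\<lambda>s. a (Suc n) * (s powr (x - 1) / Gamma x * ((t - s) powr (- \<beta>) / Gamma (1 - \<beta>))))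
      has_integral a (Suc n) / Gamma (\<beta> * real n + 1) * (t powr \<beta>) ^ n) {0..t}"
    using has_integral_mult_right[OF RL, of "a (Suc n)"] by simp
next
  show "(\<lambda>s. s powr (\<beta> - 1) * ((t - s) powr (- \<beta>) / Gamma (1 - \<beta>))) integrable_on {0..t}"
    using \<beta> t by (rule integrable_Caputo_kernel)
next
  fix n s assume s: "s \<in> {0..t}"
  define G where "G = Gamma (\<beta> * real (Suc n))"
  define \<kappa> where "\<kappa> = (t - s) powr (- \<beta>) / Gamma (1 - \<beta>)"
  have "G > 0" "\<kappa> \<ge> 0"
    using \<beta> by (simp_all add: G_def \<kappa>_def)
  have "s powr (\<beta> * real (Suc n) - 1) = s powr (\<beta> * real n) * s powr (\<beta> - 1)"
    by (simp add: algebra_simps flip: powr_add)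
  also have "\<dots> \<le> (t powr \<beta>) ^ n * s powr (\<beta> - 1)"
    using s \<beta> t by (auto simp: powr_power_eq intro!: mult_right_mono powr_mono2)
  finally have "\<bar>a (Suc n)\<bar> / G * s powr (\<beta> * real (Suc n) - 1) * \<kappa>
      \<le> \<bar>a (Suc n)\<bar> / G * ((t powr \<beta>) ^ n * s powr (\<beta> - 1)) * \<kappa>"
    using \<open>G > 0\<close> \<open>\<kappa> \<ge> 0\<close> by (intro mult_left_mono mult_right_mono) auto
  then show "\<bar>a (Suc n) * (s powr (\<beta> * real (Suc n) - 1) / G * \<kappa>)\<bar>
      \<le> \<bar>a (Suc n)\<bar> / G * (t powr \<beta>) ^ n * (s powr (\<beta> - 1) * \<kappa>)"
    using \<open>G > 0\<close> \<open>\<kappa> \<ge> 0\<close> by (simp add: abs_mult mult_ac)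
qed (use summable \<beta> in auto)

lemma summable_abs_Suc_div_Gamma:
  fixes a :: "nat \<Rightarrow> real"
  assumes \<beta>: "\<beta> > 0" and entire: "\<And>y. summable (\<lambda>m. a m / Gamma (\<beta> * real m + 1) * y ^ m)"
  shows "summable (\<lambda>n. \<bar>a (Suc n)\<bar> / Gamma (\<beta> * real (Suc n)) * y ^ n)"
proof -
  define c where "c = (\<lambda>m. \<bar>a m\<bar> / Gamma (\<beta> * real m + 1))"
  have "Gamma (\<beta> * real m + 1) > 0" for m
    using \<beta> by (intro Gamma_real_pos add_nonneg_pos) auto
  then have "summable (\<lambda>m. norm (c m * x ^ m))" for x
    using powser_insidea[OF entire[of "\<bar>x\<bar> + 1"], of x] by (simp add: c_def abs_mult power_abs)
  then have "summable (\<lambda>m. c m * x ^ m)" for x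
    by (rule summable_norm_cancel)
  then have "summable (\<lambda>n. diffs c n * y ^ n * \<beta>)"
    by (intro summable_mult2 termdiff_converges_all)
  moreover have "\<bar>a (Suc n)\<bar> / Gamma (\<beta> * real (Suc n)) * y ^ n = diffs c n * y ^ n * \<beta>" for n
    unfolding c_def by (subst diffs_div_Gamma[OF \<beta>, symmetric]) (simp only: mult_ac)
  ultimately show ?thesis
    by simp
qed

lemma has_caputo_deriv_ml_series:
  fixes a :: "nat \<Rightarrow> real"
  assumes \<beta>: "0 < \<beta>" "\<beta> < 1" and t: "t > 0"
    and entire: "\<And>y. summable (\<lambda>m. a m / Gamma (\<beta> * real m + 1) * y ^ m)"
  shows "has_caputo_deriv \<beta> (\<lambda>s. \<Sum>m. a m / Gamma (\<beta> * real m + 1) * (s powr \<beta>) ^ m) t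
           (\<Sum>m. a (Suc m) / Gamma (\<beta> * real m + 1) * (t powr \<beta>) ^ m)"
proof -
  define c where "c = (\<lambda>m. a m / Gamma (\<beta> * real m + 1))"
  define f' where "f' = (\<lambda>s. (\<Sum>n. diffs c n * (s powr \<beta>) ^ n) * (\<beta> * s powr (\<beta> - 1)))"
  define T where "T = (\<lambda>n s. a (Suc n) * (s powr (\<beta> * real (Suc n) - 1) / Gamma (\<beta> * real (Suc n))
                     * ((t - s) powr (- \<beta>) / Gamma (1 - \<beta>))))"
  have c_summable: "summable (\<lambda>m. c m * y ^ m)" for y
    using entire by (simp add: c_def)
  have "((\<lambda>s. \<Sum>n. T n s) has_integral (\<Sum>m. a (Suc m) / Gamma (\<beta> * real m + 1) * (t powr \<beta>) ^ m))
      {0<..<t}"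
    unfolding T_def has_integral_Icc_iff_Ioo[symmetric]
    by (intro has_integral_Caputo_kernel_series \<beta> t summable_abs_Suc_div_Gamma entire)
  moreover have "f' s * (t - s) powr (- \<beta>) / Gamma (1 - \<beta>) = (\<Sum>n. T n s)" if s: "s \<in> {0<..<t}" for s
  proof -
    define \<kappa> where "\<kappa> = (t - s) powr (- \<beta>) / Gamma (1 - \<beta>)"
    have "T n s = diffs c n * (s powr \<beta>) ^ n * (\<beta> * s powr (\<beta> - 1) * \<kappa>)" for n
    proof -
      have pow: "s powr (\<beta> * real (Suc n) - 1) = (s powr \<beta>) ^ n * s powr (\<beta> - 1)"
        using s by (simp add: powr_power_eq algebra_simps flip: powr_add)
      have "T n s = a (Suc n) / Gamma (\<beta> * real (Suc n)) * s powr (\<beta> * real (Suc n) - 1) * \<kappa>"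
        by (simp add: T_def \<kappa>_def)
      also have "\<dots> = diffs c n * \<beta> * ((s powr \<beta>) ^ n * s powr (\<beta> - 1)) * \<kappa>"
        by (simp only: pow c_def diffs_div_Gamma[OF \<beta>(1)])
      finally show ?thesis
        by (simp only: mult_ac)
    qed
    moreover have "f' s * (t - s) powr (- \<beta>) / Gamma (1 - \<beta>)
        = (\<Sum>n. diffs c n * (s powr \<beta>) ^ n) * (\<beta> * s powr (\<beta> - 1) * \<kappa>)"
      by (simp add: f'_def \<kappa>_def)
    ultimately show ?thesis
      using suminf_mult2[OF termdiff_converges_all[OF c_summable]] by simp
  qed
  moreover have "((\<lambda>s. \<Sum>m. a m / Gamma (\<beta> * real m + 1) * (s powr \<beta>) ^ m) has_real_derivative f' s) (at s)"
    if "s \<in> {0<..<t}" for s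
    unfolding f'_def c_def using that
    by (intro DERIV_chain'[OF has_real_derivative_powr termdiffs_strong_converges_everywhere] entire)
      auto
  ultimately show ?thesis
    by (intro has_caputo_derivI) (auto intro: has_integral_eq[rotated])
qed

section \<open>The time fractional Poisson distribution\<close>

definition tfpp_coeff :: "real \<Rightarrow> nat \<Rightarrow> nat \<Rightarrow> real" where
  "tfpp_coeff \<delta> k m = real (m choose k) * (- 1) ^ (m - k) * \<delta> ^ m"

lemma abs_tfpp_coeff_le: "\<bar>tfpp_coeff \<delta> k m\<bar> \<le> (2 * \<bar>\<delta>\<bar>) ^ m"
proof -
  have "real (m choose k) \<le> 2 ^ m"
    using binomial_le_pow2[of m k] by (metis of_nat_le_iff of_nat_numeral of_nat_power)
  then show ?thesis
    by (simp add: tfpp_coeff_def abs_mult power_abs power_mult_distrib mult_right_mono)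
qed

lemma summable_tfpp_series:
  assumes \<beta>: "0 < \<beta>" "\<beta> < 1"
  shows "summable (\<lambda>m. tfpp_coeff \<delta> k m / Gamma (\<beta> * real m + 1) * y ^ m)"
proof (rule summable_comparison_test')
  show "summable (\<lambda>m. (2 * \<bar>\<delta>\<bar> * \<bar>y\<bar>) ^ m / Gamma (\<beta> * real m + 1))"
    by (rule summable_power_div_Gamma[OF \<beta>])
  fix m
  have "\<bar>tfpp_coeff \<delta> k m\<bar> * \<bar>y\<bar> ^ m \<le> (2 * \<bar>\<delta>\<bar>) ^ m * \<bar>y\<bar> ^ m"
    by (intro mult_right_mono abs_tfpp_coeff_le) auto
  moreover have "Gamma (\<beta> * real m + 1) > 0"
    using \<beta> by (intro Gamma_real_pos add_nonneg_pos) auto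
  ultimately show "norm (tfpp_coeff \<delta> k m / Gamma (\<beta> * real m + 1) * y ^ m)
      \<le> (2 * \<bar>\<delta>\<bar> * \<bar>y\<bar>) ^ m / Gamma (\<beta> * real m + 1)"
    by (simp add: abs_mult power_abs power_mult_distrib divide_right_mono)
qed

(* Valid for every s: at s = 0 both sides are [k = 0], as 0 powr \<beta> = 0 and 0 ^ 0 = 1. *)
lemma tfpp_pmf_eq_series:
  assumes \<beta>: "0 < \<beta>" "\<beta> < 1"
  shows "tfpp_pmf \<beta> \<delta> k s = (\<Sum>m. tfpp_coeff \<delta> k m / Gamma (\<beta> * real m + 1) * (s powr \<beta>) ^ m)"
proof (cases "s = 0")
  case True
  have "(\<Sum>m. tfpp_coeff \<delta> k m / Gamma (\<beta> * real m + 1) * 0 ^ m) = tfpp_coeff \<delta> k 0"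
    using powser_zero[of "\<lambda>m. tfpp_coeff \<delta> k m / Gamma (\<beta> * real m + 1)"] by simp
  with True \<beta> show ?thesis
    by (simp add: tfpp_pmf_def tfpp_coeff_def)
next
  case False
  define u where "u = s powr \<beta>"
  define c where "c m = 1 / Gamma (\<beta> * real m + 1)" for m
  define g where "g m = tfpp_coeff \<delta> k m * c m * u ^ m" for m
  have c_summable: "summable (\<lambda>m. c m * y ^ m)" for y
    using summable_power_div_Gamma[OF \<beta>, of y] by (simp add: c_def)
  have "mittag_leffler \<beta> = (\<lambda>z. \<Sum>m. c m * z ^ m)"
    by (simp add: mittag_leffler_def c_def fun_eq_iff)
  then have "tfpp_pmf \<beta> \<delta> k s
      = (\<delta> * u) ^ k / fact k * (\<Sum>n. (diffs ^^ k) c n * (- \<delta> * u) ^ n)"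
    using False by (simp add: tfpp_pmf_def u_def higher_deriv_powser[OF c_summable])
  also have "\<dots> = (\<Sum>n. (\<delta> * u) ^ k / fact k * ((diffs ^^ k) c n * (- \<delta> * u) ^ n))"
    by (intro suminf_mult[symmetric] summable_diffs_funpow c_summable)
  also have "\<dots> = (\<Sum>n. g (n + k))"
  proof (intro suminf_cong)
    fix n
    have "fact (n + k) / fact n = fact k * real ((n + k) choose k)"
      by (simp add: binomial_fact field_simps)
    then show "(\<delta> * u) ^ k / fact k * ((diffs ^^ k) c n * (- \<delta> * u) ^ n) = g (n + k)"
      by (simp add: g_def tfpp_coeff_def diffs_funpow power_mult_distrib power_add power_minus')
  qed
  also have "\<dots> = (\<Sum>m. g m)"
  proof -
    have "g = (\<lambda>m. tfpp_coeff \<delta> k m / Gamma (\<beta> * real m + 1) * u ^ m)"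
      by (simp add: fun_eq_iff g_def c_def)
    then have "summable g"
      using summable_tfpp_series[OF \<beta>] by simp
    moreover have "(\<Sum>m<k. g m) = 0"
      by (intro sum.neutral) (simp add: g_def tfpp_coeff_def)
    ultimately show ?thesis
      by (simp add: suminf_split_initial_segment[of g k])
  qed
  finally show ?thesis
    by (simp add: g_def c_def u_def)
qed

lemma tfpp_coeff_Suc:
  "tfpp_coeff \<delta> k (Suc m) = - \<delta> * tfpp_coeff \<delta> k m + (if k = 0 then 0 else \<delta> * tfpp_coeff \<delta> (k - 1) m)"
proof (cases k)
  case (Suc j)
  have "real (m choose Suc j) * (- 1) ^ (Suc m - Suc j) = - (real (m choose Suc j) * (- 1) ^ (m - Suc j))"
  proof (cases "Suc j \<le> m")
    case True
    then have "m - j = Suc (m - Suc j)"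
      by simp
    then show ?thesis
      by simp
  qed simp
  then show ?thesis
    by (simp add: tfpp_coeff_def Suc algebra_simps)
qed (simp add: tfpp_coeff_def)

lemma has_caputo_deriv_tfpp_pmf:
  assumes \<beta>: "0 < \<beta>" "\<beta> < 1" and t: "t > 0"
  shows "has_caputo_deriv \<beta> (tfpp_pmf \<beta> \<delta> k) t
           (- \<delta> * tfpp_pmf \<beta> \<delta> k t + (if k = 0 then 0 else \<delta> * tfpp_pmf \<beta> \<delta> (k - 1) t))"
proof -
  define S where "S = (\<lambda>j m. tfpp_coeff \<delta> j m / Gamma (\<beta> * real m + 1) * (t powr \<beta>) ^ m)"
  have S: "summable (S j)" "tfpp_pmf \<beta> \<delta> j t = suminf (S j)" for j
    unfolding S_def using summable_tfpp_series[OF \<beta>] tfpp_pmf_eq_series[OF \<beta>] by auto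
  have "has_caputo_deriv \<beta> (tfpp_pmf \<beta> \<delta> k) t
      (\<Sum>m. tfpp_coeff \<delta> k (Suc m) / Gamma (\<beta> * real m + 1) * (t powr \<beta>) ^ m)"
    using has_caputo_deriv_ml_series[OF \<beta> t summable_tfpp_series[OF \<beta>]]
    by (simp add: tfpp_pmf_eq_series[OF \<beta>, abs_def])
  also have "(\<Sum>m. tfpp_coeff \<delta> k (Suc m) / Gamma (\<beta> * real m + 1) * (t powr \<beta>) ^ m)
      = (\<Sum>m. - \<delta> * S k m + (if k = 0 then 0 else \<delta> * S (k - 1) m))"
    by (cases "k = 0") (simp_all add: S_def tfpp_coeff_Suc algebra_simps diff_divide_distrib)
  also have "\<dots> = - \<delta> * tfpp_pmf \<beta> \<delta> k t + (if k = 0 then 0 else \<delta> * tfpp_pmf \<beta> \<delta> (k - 1) t)"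
    using S by (cases "k = 0") (simp_all add: suminf_minus suminf_diff[symmetric] suminf_mult summable_mult)
  finally show ?thesis .
qed

lemma has_caputo_deriv_tfpp_pmf_sum:
  assumes \<beta>: "0 < \<beta>" "\<beta> < 1" and t: "t > 0"
  shows "has_caputo_deriv \<beta> (\<lambda>s. \<Sum>k\<le>n. w k * tfpp_pmf \<beta> \<delta> k s) t
           (- \<delta> * (\<Sum>k\<le>n. w k * tfpp_pmf \<beta> \<delta> k t) + \<delta> * (\<Sum>k=1..n. w k * tfpp_pmf \<beta> \<delta> (k - 1) t))"
proof -
  define p where "p = (\<lambda>k. tfpp_pmf \<beta> \<delta> k t)"
  have "has_caputo_deriv \<beta> (\<lambda>s. \<Sum>k\<le>n. w k * tfpp_pmf \<beta> \<delta> k s) t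
      (\<Sum>k\<le>n. w k * (- \<delta> * p k + (if k = 0 then 0 else \<delta> * p (k - 1))))"
    unfolding p_def by (intro has_caputo_deriv_sum has_caputo_deriv_tfpp_pmf \<beta> t) auto
  also have "(\<Sum>k\<le>n. w k * (- \<delta> * p k + (if k = 0 then 0 else \<delta> * p (k - 1))))
      = (\<Sum>k\<le>n. - \<delta> * (w k * p k) + \<delta> * (if k = 0 then 0 else w k * p (k - 1)))"
    by (intro sum.cong) (auto simp: algebra_simps)
  also have "\<dots> = - \<delta> * (\<Sum>k\<le>n. w k * p k) + \<delta> * (\<Sum>k\<in>{0..n}. if k = 0 then 0 else w k * p (k - 1))"
    unfolding sum.distrib by (simp add: sum_distrib_left atMost_atLeast0)
  also have "(\<Sum>k\<in>{0..n}. if k = 0 then 0 else w k * p (k - 1)) = (\<Sum>k=1..n. w k * p (k - 1))"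
    by (simp add: sum.atLeast_Suc_atMost)
  finally show ?thesis
    by (simp add: p_def)
qed

section \<open>Compound sums\<close>

lemma Collect_in_vimage_algebra:
  assumes "f \<in> \<Omega> \<rightarrow> space N" and "{x \<in> space N. P x} \<in> sets N"
  shows "{\<omega> \<in> \<Omega>. P (f \<omega>)} \<in> sets (vimage_algebra \<Omega> f N)"
proof -
  have "f -` {x \<in> space N. P x} \<inter> \<Omega> = {\<omega> \<in> \<Omega>. P (f \<omega>)}"
    using assms(1) by auto
  then show ?thesis
    using in_vimage_algebra[OF assms(2), of f \<Omega>] by simp
qed

lemma coordinate_set_in_vimage_PiM:
  assumes "i \<in> I"
  shows "{\<omega> \<in> \<Omega>. X i \<omega> = k}
    \<in> sets (vimage_algebra \<Omega> (\<lambda>\<omega>. \<lambda>i\<in>I. X i \<omega>) (PiM I (\<lambda>_. count_space (UNIV :: nat set))))"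
proof -
  have "{g \<in> space (PiM I (\<lambda>_. count_space (UNIV :: nat set))). g i = k}
      \<in> sets (PiM I (\<lambda>_. count_space UNIV))"
    using assms by measurable
  from Collect_in_vimage_algebra[OF _ this, of "\<lambda>\<omega>. \<lambda>i\<in>I. X i \<omega>" \<Omega>] show ?thesis
    using assms by (simp add: space_PiM)
qed

lemma partial_sum_set_in_vimage_PiM:
  assumes "{1..k} \<subseteq> I"
  shows "{\<omega> \<in> \<Omega>. (\<Sum>j=1..k. X j \<omega>) = n}
    \<in> sets (vimage_algebra \<Omega> (\<lambda>\<omega>. \<lambda>i\<in>I. X i \<omega>) (PiM I (\<lambda>_. count_space (UNIV :: nat set))))"
proof -
  have [measurable]: "j \<in> I" if "j \<in> {1..k}" for j
    using assms that by auto
  have "{g \<in> space (PiM I (\<lambda>_. count_space (UNIV :: nat set))). (\<Sum>j=1..k. g j) = n}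
      \<in> sets (PiM I (\<lambda>_. count_space UNIV))"
    by measurable
  from Collect_in_vimage_algebra[OF _ this, of "\<lambda>\<omega>. \<lambda>i\<in>I. X i \<omega>" \<Omega>]
  have "{\<omega> \<in> \<Omega>. (\<Sum>j=1..k. (\<lambda>i\<in>I. X i \<omega>) j) = n} \<in> sets (vimage_algebra \<Omega> (\<lambda>\<omega>. \<lambda>i\<in>I. X i \<omega>) (PiM I (\<lambda>_. count_space UNIV)))"
    by (simp add: space_PiM)
  moreover have "(\<Sum>j=1..k. (\<lambda>i\<in>I. X i \<omega>) j) = (\<Sum>j=1..k. X j \<omega>)" for \<omega>
    using assms by (intro sum.cong) auto
  ultimately show ?thesis
    by simp
qed

lemma le_if_sum_nonzero_eq:
  fixes Y :: "nat \<Rightarrow> nat"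
  assumes "\<forall>j\<in>{1..Suc n}. Y j \<noteq> 0" and "(\<Sum>j=1..k. Y j) = n"
  shows "k \<le> n"
proof (rule ccontr)
  assume "\<not> k \<le> n"
  have "Suc n = (\<Sum>j=1..Suc n. 1)"
    by simp
  also have "\<dots> \<le> (\<Sum>j=1..Suc n. Y j)"
    using assms(1) by (intro sum_mono) (auto simp: Suc_le_eq)
  also have "\<dots> \<le> (\<Sum>j=1..k. Y j)"
    using \<open>\<not> k \<le> n\<close> by (intro sum_mono2) auto
  finally show False
    using assms(2) by simp
qed

context prob_space
begin

lemma AE_neq_0_if_sums_Suc:
  fixes X :: "'a \<Rightarrow> nat"
  assumes events: "\<And>j. {\<omega> \<in> space M. X \<omega> = j} \<in> events"
    and sums: "(\<lambda>j. prob {\<omega> \<in> space M. X \<omega> = Suc j}) sums 1"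
  shows "AE \<omega> in M. X \<omega> \<noteq> 0"
proof -
  have "(\<lambda>j. prob {\<omega> \<in> space M. X \<omega> = j}) sums prob (\<Union>j. {\<omega> \<in> space M. X \<omega> = j})"
    using events by (intro finite_measure_UNION) (auto simp: disjoint_family_on_def)
  moreover have "(\<Union>j. {\<omega> \<in> space M. X \<omega> = j}) = space M"
    by auto
  moreover have "(\<lambda>j. prob {\<omega> \<in> space M. X \<omega> = j}) sums (1 + prob {\<omega> \<in> space M. X \<omega> = 0})"
    using sums by (subst (asm) sums_Suc_iff)
  ultimately have "prob {\<omega> \<in> space M. X \<omega> = 0} = 0"
    using sums_unique2 by (fastforce simp: prob_space)
  then show ?thesis
    using events[of 0] by (intro AE_I'[of "{\<omega> \<in> space M. X \<omega> = 0}"]) (auto simp: emeasure_eq_measure)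
qed

lemma prob_random_sum:
  fixes N :: "'a \<Rightarrow> nat" and Y :: "nat \<Rightarrow> 'a \<Rightarrow> nat"
  assumes indep: "indep_set A B"
    and N: "\<And>k. {\<omega> \<in> space M. N \<omega> = k} \<in> A"
    and S: "\<And>k. {\<omega> \<in> space M. (\<Sum>j=1..k. Y j \<omega>) = n} \<in> B"
    and Y: "\<And>j. j \<ge> 1 \<Longrightarrow> AE \<omega> in M. Y j \<omega> \<noteq> 0"
  shows "prob {\<omega> \<in> space M. (\<Sum>j=1..N \<omega>. Y j \<omega>) = n}
    = (\<Sum>k\<le>n. prob {\<omega> \<in> space M. N \<omega> = k} * prob {\<omega> \<in> space M. (\<Sum>j=1..k. Y j \<omega>) = n})"
proof -
  define EN where "EN k = {\<omega> \<in> space M. N \<omega> = k}" for k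
  define ES where "ES k = {\<omega> \<in> space M. (\<Sum>j=1..k. Y j \<omega>) = n}" for k
  have ev: "EN k \<in> events" "ES k \<in> events" for k
    using N S indep_setD_ev1[OF indep] indep_setD_ev2[OF indep] by (auto simp: EN_def ES_def)
  have "{\<omega> \<in> space M. (\<Sum>j=1..N \<omega>. Y j \<omega>) = n} = (\<Union>k. EN k \<inter> ES k)"
    by (auto simp: EN_def ES_def)
  moreover have "AE \<omega> in M. \<omega> \<in> (\<Union>k. EN k \<inter> ES k) \<longleftrightarrow> \<omega> \<in> (\<Union>k\<le>n. EN k \<inter> ES k)"
  proof -
    have "AE \<omega> in M. \<forall>j\<in>{1..Suc n}. Y j \<omega> \<noteq> 0"
      using Y by (subst AE_finite_all) auto
    then show ?thesis
    proof eventually_elim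
      case (elim \<omega>)
      then show ?case
        using le_if_sum_nonzero_eq[of n "\<lambda>j. Y j \<omega>" "N \<omega>"] by (auto simp: EN_def ES_def)
    qed
  qed
  ultimately have "prob {\<omega> \<in> space M. (\<Sum>j=1..N \<omega>. Y j \<omega>) = n} = prob (\<Union>k\<le>n. EN k \<inter> ES k)"
    using ev by (auto intro!: finite_measure_eq_AE)
  also have "\<dots> = (\<Sum>k\<le>n. prob (EN k \<inter> ES k))"
    using ev by (intro finite_measure_finite_Union) (auto simp: disjoint_family_on_def EN_def)
  also have "\<dots> = (\<Sum>k\<le>n. prob (EN k) * prob (ES k))"
    using N S by (intro sum.cong refl indep_setD[OF indep]) (auto simp: EN_def ES_def)
  finally show ?thesis
    by (simp add: EN_def ES_def)
qed


lemma prob_compound_process: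
  fixes N :: "real \<Rightarrow> 'a \<Rightarrow> nat" and Y :: "nat \<Rightarrow> 'a \<Rightarrow> nat"
  assumes indep: "indep_set
        (sets (vimage_algebra (space M) (\<lambda>\<omega>. \<lambda>t\<in>{0::real..}. N t \<omega>)
                 (PiM {0::real..} (\<lambda>_. count_space (UNIV::nat set)))))
        (sets (vimage_algebra (space M) (\<lambda>\<omega>. \<lambda>i\<in>{1::nat..}. Y i \<omega>)
                 (PiM {1::nat..} (\<lambda>_. count_space (UNIV::nat set)))))"
    and Y_pos: "\<And>i. i \<ge> 1 \<Longrightarrow> (\<lambda>j. prob {\<omega> \<in> space M. Y i \<omega> = Suc j}) sums 1"
    and t: "t \<ge> 0"
  shows "prob {\<omega> \<in> space M. (\<Sum>j=1..N t \<omega>. Y j \<omega>) = n}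
    = (\<Sum>k\<le>n. prob {\<omega> \<in> space M. N t \<omega> = k} * prob {\<omega> \<in> space M. (\<Sum>j=1..k. Y j \<omega>) = n})"
proof (rule prob_random_sum[OF indep])
  show "AE \<omega> in M. Y i \<omega> \<noteq> 0" if "i \<ge> 1" for i
    using that indep_setD_ev2[OF indep] coordinate_set_in_vimage_PiM[of i "{1..}"]
    by (intro AE_neq_0_if_sums_Suc Y_pos) blast+
qed (rule coordinate_set_in_vimage_PiM partial_sum_set_in_vimage_PiM; use t in auto)+

end

theorem mainTheorem12:
  fixes \<beta> \<delta> :: real and lam :: "nat \<Rightarrow> real"
    and P :: "'a measure"
    and N :: "real \<Rightarrow> 'a \<Rightarrow> nat" and Y :: "nat \<Rightarrow> 'a \<Rightarrow> nat"
    and q :: "nat \<Rightarrow> real \<Rightarrow> real" and h :: "nat \<Rightarrow> nat \<Rightarrow> real"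
  assumes beta: "0 < \<beta>" "\<beta> < 1"
    and lam_nonneg: "\<And>j. j \<ge> 1 \<Longrightarrow> lam j \<ge> 0"
    and lam_sum: "(\<lambda>j. lam (Suc j)) sums \<delta>" and delta_pos: "\<delta> > 0"
    and lam_gf: "\<exists>M>0. \<forall>x::real. 0 < \<bar>x\<bar> \<and> \<bar>x\<bar> < M \<longrightarrow> summable (\<lambda>j. x ^ (Suc j) * lam (Suc j))"
    and P: "prob_space P"
    and Y_indep: "prob_space.indep_vars P (\<lambda>_. count_space UNIV) Y {1..}"
    and Y_dist: "\<And>i j. i \<ge> 1 \<Longrightarrow> j \<ge> 1 \<Longrightarrow>
                   measure P {\<omega> \<in> space P. Y i \<omega> = j} = lam j / \<delta>"
    and N_dist: "\<And>t n. t \<ge> 0 \<Longrightarrow> measure P {\<omega> \<in> space P. N t \<omega> = n} = tfpp_pmf \<beta> \<delta> n t"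
    and NY_indep: "prob_space.indep_set P
        (sets (vimage_algebra (space P) (\<lambda>\<omega>. \<lambda>t\<in>{0::real..}. N t \<omega>)
                 (PiM {0::real..} (\<lambda>_. count_space (UNIV::nat set)))))
        (sets (vimage_algebra (space P) (\<lambda>\<omega>. \<lambda>i\<in>{1::nat..}. Y i \<omega>)
                 (PiM {1::nat..} (\<lambda>_. count_space (UNIV::nat set)))))"
    and q_def: "\<And>n t. q n t = measure P {\<omega> \<in> space P. (\<Sum>j=1..N t \<omega>. Y j \<omega>) = n}"
    and h_def: "\<And>k n. h k n = measure P {\<omega> \<in> space P. (\<Sum>j=1..k. Y j \<omega>) = n}"
  shows "(\<forall>t>0. has_caputo_deriv \<beta> (q 0) t (- \<delta> * tfpp_pmf \<beta> \<delta> 0 t)) \<and>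
         (\<forall>n\<ge>1. \<forall>t>0. has_caputo_deriv \<beta> (q n) t
             (- \<delta> * q n t + \<delta> * (\<Sum>k=1..n. h k n * tfpp_pmf \<beta> \<delta> (k - 1) t)))"
proof -
  interpret prob_space P
    by (rule P)
  have Y_pos: "(\<lambda>j. prob {\<omega> \<in> space P. Y i \<omega> = Suc j}) sums 1" if "i \<ge> 1" for i
    using sums_divide[OF lam_sum, of \<delta>] delta_pos that by (simp add: Y_dist)
  have q_eq: "q n s = (\<Sum>k\<le>n. h k n * tfpp_pmf \<beta> \<delta> k s)" if "s \<ge> 0" for n s
    using prob_compound_process[OF NY_indep Y_pos that, of n] that
    by (simp add: q_def h_def N_dist mult.commute)
  have caputo: "has_caputo_deriv \<beta> (q n) t
      (- \<delta> * q n t + \<delta> * (\<Sum>k=1..n. h k n * tfpp_pmf \<beta> \<delta> (k - 1) t))" if "t > 0" for n t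
    using has_caputo_deriv_cong[OF _ has_caputo_deriv_tfpp_pmf_sum[OF beta that, where w = "\<lambda>k. h k n" and n = n and \<delta> = \<delta>]]
      q_eq that by auto
  moreover have "has_caputo_deriv \<beta> (q 0) t (- \<delta> * tfpp_pmf \<beta> \<delta> 0 t)" if "t > 0" for t
    using caputo[OF that, of 0] q_eq[of t 0] that by (simp add: h_def prob_space)
  ultimately show ?thesis
    by blast
qed

end
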